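(* Let $\sigma$ be an anti-involution of $\mathcal D_{as}$, i.e. a $\mathbb C$-linear map with $\sigma^2=\mathrm{id}$ and $\sigma(XY)=\sigma(Y)\sigma(X)$ for all $X,Y$. Suppose $\sigma$ preserves the principal $\mathbb Z$-gradation. Then there is $b\in\mathbb C$ such that $\sigma$ is one of the following: (1) $\sigma_{-,b}$, defined by $\sigma_{-,b}(t)=-t$, $\sigma_{-,b}(D)=-D+b$; (2) $\sigma_{+,b}$, defined by $\sigma_{+,b}(t)=t$, $\sigma_{+,b}(D)=-D+b$.
   Context: $\mathcal D_{as}$ is the associative algebra of differential operators on the circle: it has basis $t^k D^l$ ($k\in\mathbb Z$, $l\in\mathbb Z_{\ge0}$), where $D=t\,\frac{d}{dt}$, with the relation $f(D)\,t^s=t^s f(D+s)$ for polynomials $f$. The principal $\mathbb Z$-gradation assigns degree $k$ to $t^k f(D)$. *)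

theory Defs
  imports "HOL-Computational_Algebra.Polynomial"
begin

text \<open>Model of D_as: an element sum_k t^k f_k(D) is the function k |-> f_k,
  a complex polynomial in D, with finite support.\<close>

definition dsupp :: "(int \<Rightarrow> complex poly) \<Rightarrow> int set" where
  "dsupp X = {k. X k \<noteq> 0}"

definition Das :: "(int \<Rightarrow> complex poly) set" where
  "Das = {X. finite (dsupp X)}"

definition dadd :: "(int \<Rightarrow> complex poly) \<Rightarrow> (int \<Rightarrow> complex poly) \<Rightarrow> (int \<Rightarrow> complex poly)" where
  "dadd X Y = (\<lambda>k. X k + Y k)"

definition dscale :: "complex \<Rightarrow> (int \<Rightarrow> complex poly) \<Rightarrow> (int \<Rightarrow> complex poly)" where
  "dscale c X = (\<lambda>k. smult c (X k))"

text \<open>(t^a f(D)) (t^b g(D)) = t^(a+b) f(D+b) g(D).\<close>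
definition dmult :: "(int \<Rightarrow> complex poly) \<Rightarrow> (int \<Rightarrow> complex poly) \<Rightarrow> (int \<Rightarrow> complex poly)" where
  "dmult X Y = (\<lambda>k. \<Sum>b\<in>dsupp Y. pcompose (X (k - b)) [:of_int b, 1:] * Y b)"

definition homog :: "int \<Rightarrow> (int \<Rightarrow> complex poly) \<Rightarrow> bool" where
  "homog k X \<longleftrightarrow> dsupp X \<subseteq> {k}"

definition anti_involution :: "((int \<Rightarrow> complex poly) \<Rightarrow> (int \<Rightarrow> complex poly)) \<Rightarrow> bool" where
  "anti_involution \<sigma> \<longleftrightarrow>
     (\<forall>X\<in>Das. \<sigma> X \<in> Das) \<and>
     (\<forall>X\<in>Das. \<forall>Y\<in>Das. \<sigma> (dadd X Y) = dadd (\<sigma> X) (\<sigma> Y)) \<and>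
     (\<forall>c. \<forall>X\<in>Das. \<sigma> (dscale c X) = dscale c (\<sigma> X)) \<and>
     (\<forall>X\<in>Das. \<sigma> (\<sigma> X) = X) \<and>
     (\<forall>X\<in>Das. \<forall>Y\<in>Das. \<sigma> (dmult X Y) = dmult (\<sigma> Y) (\<sigma> X))"

definition preserves_grading :: "((int \<Rightarrow> complex poly) \<Rightarrow> (int \<Rightarrow> complex poly)) \<Rightarrow> bool" where
  "preserves_grading \<sigma> \<longleftrightarrow> (\<forall>k. \<forall>X\<in>Das. homog k X \<longrightarrow> homog k (\<sigma> X))"

text \<open>The anti-involution with sigma(t) = s t, sigma(D) = -D + b (s = 1 or -1):
  sigma(t^k f(D)) = f(-D+b) (s t)^k = s^k t^k f(-D-k+b).\<close>
definition sigma_sb :: "complex \<Rightarrow> complex \<Rightarrow> (int \<Rightarrow> complex poly) \<Rightarrow> (int \<Rightarrow> complex poly)" where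
  "sigma_sb s b X = (\<lambda>k. smult (s powi k) (pcompose (X k) [:b - of_int k, -1:]))"

abbreviation sigma_minus :: "complex \<Rightarrow> (int \<Rightarrow> complex poly) \<Rightarrow> (int \<Rightarrow> complex poly)" where
  "sigma_minus b \<equiv> sigma_sb (-1) b"

abbreviation sigma_plus :: "complex \<Rightarrow> (int \<Rightarrow> complex poly) \<Rightarrow> (int \<Rightarrow> complex poly)" where
  "sigma_plus b \<equiv> sigma_sb 1 b"

end

theory Submission
  imports Defs
begin

text \<open>A grading-preserving anti-involution \<open>\<sigma>\<close> fixes 1 and maps each homogeneous component to
  itself. On the commutative degree-0 part \<open>\<complex>[D]\<close> it is therefore an involutive ring endomorphism
  fixing the constants, i.e. \<open>f(D) \<mapsto> f(p)\<close> with \<open>p \<circ> p = D\<close>, which forces \<open>p = aD + b\<close>. Since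
  \<open>t\<close> and \<open>t\<^sup>-\<^sup>1\<close> are mutually inverse, \<open>\<sigma>(t) = c t\<close> with \<open>c \<noteq> 0\<close>; applying \<open>\<sigma>\<close> to
  \<open>D t = t (D + 1)\<close> gives \<open>a = -1\<close>, and \<open>\<sigma>(\<sigma>(t)) = t\<close> gives \<open>c\<^sup>2 = 1\<close>. Then
  \<open>\<sigma>(t\<^sup>k f(D)) = \<sigma>(f(D)) \<sigma>(t)\<^sup>k = f(-D + b) c\<^sup>k t\<^sup>k\<close>, and additivity extends this to all
  of \<open>\<D>\<^sub>a\<^sub>s\<close>.\<close>

definition dmonom :: "int \<Rightarrow> complex poly \<Rightarrow> (int \<Rightarrow> complex poly)" where
  "dmonom k f = (\<lambda>j. if j = k then f else 0)"

lemma dsupp_dmonom_subset: "dsupp (dmonom k f) \<subseteq> {k}"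
  by (auto simp: dsupp_def dmonom_def)

lemma dmonom_in_Das: "dmonom k f \<in> Das"
  unfolding Das_def using dsupp_dmonom_subset finite_subset by blast

lemma homog_dmonom: "homog k (dmonom k f)"
  by (simp add: homog_def dsupp_dmonom_subset)

lemma homog_imp_eq_dmonom: "homog k X \<Longrightarrow> X = dmonom k (X k)"
  by (auto simp: homog_def dsupp_def dmonom_def fun_eq_iff)

lemma dmonom_eq_iff [simp]: "dmonom k f = dmonom k g \<longleftrightarrow> f = g"
  by (metis dmonom_def)

lemma dmonom_eq_0 [simp]: "dmonom k 0 = (\<lambda>_. 0)"
  by (simp add: dmonom_def fun_eq_iff)

lemma dmult_dmonom_right:
  "dmult X (dmonom b g) = (\<lambda>k. pcompose (X (k - b)) [:of_int b, 1:] * g)"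
proof (cases "g = 0")
  case True
  then have "dsupp (dmonom b g) = {}" by (auto simp: dsupp_def dmonom_def)
  then show ?thesis using True by (simp add: dmult_def)
next
  case False
  then have "dsupp (dmonom b g) = {b}" by (auto simp: dsupp_def dmonom_def)
  then show ?thesis by (simp add: dmult_def dmonom_def)
qed

lemma dmult_dmonom:
  "dmult (dmonom a f) (dmonom b g) = dmonom (a + b) (pcompose f [:of_int b, 1:] * g)"
  unfolding dmult_dmonom_right by (auto simp: dmonom_def fun_eq_iff)

lemma dmult_one_right: "dmult X (dmonom 0 1) = X"
  by (simp add: dmult_dmonom_right)

lemma dadd_dmonom: "dadd (dmonom k f) (dmonom k g) = dmonom k (f + g)"
  by (auto simp: dadd_def dmonom_def)

lemma dscale_dmonom: "dscale c (dmonom k f) = dmonom k (smult c f)"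
  by (auto simp: dscale_def dmonom_def)

lemma sigma_sb_dmonom:
  "sigma_sb s b (dmonom k f) = dmonom k (smult (s powi k) (pcompose f [:b - of_int k, -1:]))"
  by (auto simp: sigma_sb_def dmonom_def fun_eq_iff)

lemma sigma_sb_dadd: "sigma_sb s b (dadd X Y) = dadd (sigma_sb s b X) (sigma_sb s b Y)"
  by (simp add: sigma_sb_def dadd_def pcompose_add fun_eq_iff smult_add_right)

lemma additive_maps_eq_on_Das:
  assumes F_add: "\<And>X Y. X \<in> Das \<Longrightarrow> Y \<in> Das \<Longrightarrow> F (dadd X Y) = dadd (F X) (F Y)"
    and G_add: "\<And>X Y. G (dadd X Y) = dadd (G X) (G Y)"
    and monom: "\<And>k f. F (dmonom k f) = G (dmonom k f)"
    and X: "X \<in> Das"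
  shows "F X = G X"
proof -
  have "F X = G X" if "finite S" "dsupp X = S" for S X
    using that
  proof (induction S arbitrary: X rule: finite_induct)
    case empty
    then have "X = dmonom 0 0" by (auto simp: dsupp_def)
    then show ?case by (simp only: monom)
  next
    case (insert k S)
    define Y where "Y = X(k := 0)"
    have Y: "dsupp Y = S" using insert.prems insert.hyps(2) by (auto simp: dsupp_def Y_def)
    then have "Y \<in> Das" using insert.hyps(1) by (simp add: Das_def)
    moreover have "X = dadd (dmonom k (X k)) Y" by (auto simp: dadd_def dmonom_def Y_def)
    ultimately show ?case
      using F_add G_add monom insert.IH[OF Y] dmonom_in_Das by metis
  qed
  then show ?thesis using X by (simp add: Das_def)
qed

lemma pCons_eq_const_plus_X_mult: "pCons a f = [:a:] + [:0, 1:] * (f :: 'a::comm_semiring_1 poly)"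
  by simp

lemma ring_endo_poly_eq_pcompose:
  fixes \<phi> :: "'a::comm_ring_1 poly \<Rightarrow> 'a poly"
  assumes add: "\<And>f g. \<phi> (f + g) = \<phi> f + \<phi> g"
    and mult: "\<And>f g. \<phi> (f * g) = \<phi> f * \<phi> g"
    and const: "\<And>c. \<phi> [:c:] = [:c:]"
  shows "\<phi> f = pcompose f (\<phi> [:0, 1:])"
proof (induction f rule: pCons_induct)
  case 0
  then show ?case using const[of 0] by simp
next
  case (pCons a f)
  have "\<phi> (pCons a f) = \<phi> ([:a:] + [:0, 1:] * f)"
    by (subst pCons_eq_const_plus_X_mult) (rule refl)
  also have "\<dots> = [:a:] + \<phi> [:0, 1:] * \<phi> f"
    by (simp only: add mult const)
  finally show ?case using pCons.IH by (simp add: pcompose_pCons)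
qed

lemma pcompose_self_eq_X_imp_linear:
  fixes p :: "'a::idom poly"
  assumes "pcompose p p = [:0, 1:]"
  shows "p = [:coeff p 0, coeff p 1:]"
proof -
  have "degree p * degree p = 1"
    using arg_cong[OF assms, of degree] by (simp add: degree_pcompose)
  then have "degree p = 1" by simp
  then obtain a b where "p = [:b, a:]" by (rule degree1_coeffs)
  then show ?thesis by simp
qed

lemma unit_pcompose_shift_imp_const:
  fixes g :: "'a::idom poly"
  assumes "pcompose g [:a, 1:] dvd 1"
  shows "g = [:coeff g 0:]"
proof -
  from assms obtain c where "pcompose g [:a, 1:] = [:c:]" by (rule is_unit_polyE)
  then have "degree (pcompose g [:a, 1:]) = 0" by simp
  then have "degree g = 0" by (simp add: degree_pcompose)
  then show ?thesis by (simp add: degree_0_id)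
qed

locale graded_anti_involution =
  fixes \<sigma> :: "(int \<Rightarrow> complex poly) \<Rightarrow> (int \<Rightarrow> complex poly)"
  assumes anti_involution: "anti_involution \<sigma>"
    and graded: "preserves_grading \<sigma>"
begin

lemma sigma_in_Das: "X \<in> Das \<Longrightarrow> \<sigma> X \<in> Das"
  and sigma_dadd: "X \<in> Das \<Longrightarrow> Y \<in> Das \<Longrightarrow> \<sigma> (dadd X Y) = dadd (\<sigma> X) (\<sigma> Y)"
  and sigma_dscale: "X \<in> Das \<Longrightarrow> \<sigma> (dscale c X) = dscale c (\<sigma> X)"
  and sigma_sigma: "X \<in> Das \<Longrightarrow> \<sigma> (\<sigma> X) = X"
  and sigma_dmult: "X \<in> Das \<Longrightarrow> Y \<in> Das \<Longrightarrow> \<sigma> (dmult X Y) = dmult (\<sigma> Y) (\<sigma> X)"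
  using anti_involution unfolding anti_involution_def by blast+

lemma sigma_dmonom_dmonom: "\<sigma> (dmonom k f) = dmonom k (\<sigma> (dmonom k f) k)"
  using graded dmonom_in_Das homog_dmonom homog_imp_eq_dmonom
  unfolding preserves_grading_def by blast

lemma sigma_dmult_dmonom:
  "\<sigma> (dmult (dmonom a f) (dmonom b g)) = dmult (\<sigma> (dmonom b g)) (\<sigma> (dmonom a f))"
  by (simp add: sigma_dmult dmonom_in_Das)

lemma sigma_one: "\<sigma> (dmonom 0 1) = dmonom 0 1"
proof -
  let ?u = "\<sigma> (dmonom 0 1)"
  have u: "?u \<in> Das" by (simp add: sigma_in_Das dmonom_in_Das)
  have "\<sigma> ?u = \<sigma> (dmult ?u (dmonom 0 1))" by (simp add: dmult_one_right)
  also have "\<dots> = dmult (\<sigma> (dmonom 0 1)) (\<sigma> ?u)" by (simp add: sigma_dmult u dmonom_in_Das)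
  also have "\<dots> = ?u" by (simp add: sigma_sigma dmonom_in_Das dmult_one_right)
  finally show ?thesis by (metis sigma_sigma dmonom_in_Das)
qed

definition sigma0 :: "complex poly \<Rightarrow> complex poly" where
  "sigma0 f = \<sigma> (dmonom 0 f) 0"

lemma sigma_dmonom_0: "\<sigma> (dmonom 0 f) = dmonom 0 (sigma0 f)"
  unfolding sigma0_def by (rule sigma_dmonom_dmonom)

lemma sigma0_add: "sigma0 (f + g) = sigma0 f + sigma0 g"
proof -
  have "dmonom 0 (sigma0 (f + g)) = dadd (\<sigma> (dmonom 0 f)) (\<sigma> (dmonom 0 g))"
    by (simp flip: sigma_dmonom_0 dadd_dmonom add: sigma_dadd dmonom_in_Das)
  then show ?thesis by (simp add: sigma_dmonom_0 dadd_dmonom)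
qed

lemma sigma0_mult: "sigma0 (f * g) = sigma0 f * sigma0 g"
proof -
  have "dmonom 0 (sigma0 (f * g)) = \<sigma> (dmult (dmonom 0 f) (dmonom 0 g))"
    by (simp add: sigma_dmonom_0 dmult_dmonom)
  also have "\<dots> = dmonom 0 (sigma0 g * sigma0 f)"
    by (simp only: sigma_dmult_dmonom sigma_dmonom_0) (simp add: dmult_dmonom)
  finally show ?thesis by (simp add: mult.commute)
qed

lemma sigma0_const: "sigma0 [:c:] = [:c:]"
proof -
  have "dmonom 0 (sigma0 [:c:]) = \<sigma> (dscale c (dmonom 0 1))"
    by (simp add: sigma_dmonom_0 dscale_dmonom)
  also have "\<dots> = dscale c (dmonom 0 1)"
    by (simp only: sigma_dscale[OF dmonom_in_Das] sigma_one)
  also have "\<dots> = dmonom 0 [:c:]"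
    by (simp add: dscale_dmonom)
  finally show ?thesis by simp
qed

lemma sigma0_sigma0: "sigma0 (sigma0 f) = f"
  using sigma_sigma[OF dmonom_in_Das, of 0 f] by (simp add: sigma_dmonom_0)

definition sigmaD :: "complex poly" where
  "sigmaD = sigma0 [:0, 1:]"

lemma sigma0_eq_pcompose: "sigma0 f = pcompose f sigmaD"
  unfolding sigmaD_def by (rule ring_endo_poly_eq_pcompose[OF sigma0_add sigma0_mult sigma0_const])

lemma sigmaD_linear: "sigmaD = [:coeff sigmaD 0, coeff sigmaD 1:]"
proof (rule pcompose_self_eq_X_imp_linear)
  show "pcompose sigmaD sigmaD = [:0, 1:]"
    using sigma0_sigma0[of "[:0, 1:]"]
    by (simp add: sigma0_eq_pcompose pcompose_pCons flip: sigmaD_def)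
qed

definition sigma_t_coeff :: complex where
  "sigma_t_coeff = coeff (\<sigma> (dmonom 1 1) 1) 0"

lemma sigma_t_coeff_nonzero: "sigma_t_coeff \<noteq> 0"
    and sigma_t_eq: "\<sigma> (dmonom 1 1) = dmonom 1 [:sigma_t_coeff:]"
    and sigma_t_inverse_eq: "\<sigma> (dmonom (-1) 1) = dmonom (-1) [:inverse sigma_t_coeff:]"
proof -
  define g where "g = \<sigma> (dmonom 1 1) 1"
  define h where "h = \<sigma> (dmonom (-1) 1) (-1)"
  have \<sigma>g: "\<sigma> (dmonom 1 1) = dmonom 1 g" and \<sigma>h: "\<sigma> (dmonom (-1) 1) = dmonom (-1) h"
    unfolding g_def h_def by (rule sigma_dmonom_dmonom)+
  have "dmult (dmonom (-1) 1) (dmonom 1 1) = dmonom 0 1" by (simp add: dmult_dmonom pcompose_1)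
  then have "dmult (dmonom 1 g) (dmonom (-1) h) = dmonom 0 1"
    using sigma_dmult_dmonom[of "-1" 1 1 1] by (simp add: sigma_one \<sigma>g \<sigma>h)
  then have gh: "pcompose g [:-1, 1:] * h = 1" by (simp add: dmult_dmonom)
  then have g_eq: "g = [:sigma_t_coeff:]"
    unfolding sigma_t_coeff_def g_def[symmetric]
    by (metis dvd_triv_left unit_pcompose_shift_imp_const)
  with gh have ch: "smult sigma_t_coeff h = 1" by simp
  then show nz: "sigma_t_coeff \<noteq> 0" by auto
  show "\<sigma> (dmonom 1 1) = dmonom 1 [:sigma_t_coeff:]" using g_eq \<sigma>g by simp
  have "h = smult (inverse sigma_t_coeff) (smult sigma_t_coeff h)" using nz by simp
  then show "\<sigma> (dmonom (-1) 1) = dmonom (-1) [:inverse sigma_t_coeff:]"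
    using ch \<sigma>h by simp
qed

lemma sigma_t_coeff_cases: "sigma_t_coeff = 1 \<or> sigma_t_coeff = -1"
proof -
  let ?c = sigma_t_coeff
  have "dmonom 1 1 = \<sigma> (dmonom 1 [:?c:])"
    using sigma_sigma[OF dmonom_in_Das, of 1 1] by (simp only: sigma_t_eq)
  also have "\<dots> = \<sigma> (dscale ?c (dmonom 1 1))" by (simp add: dscale_dmonom)
  also have "\<dots> = dscale ?c (\<sigma> (dmonom 1 1))" by (rule sigma_dscale[OF dmonom_in_Das])
  also have "\<dots> = dmonom 1 [:?c * ?c:]" by (simp add: sigma_t_eq dscale_dmonom)
  finally have "?c * ?c = 1" by (simp add: one_pCons)
  then show ?thesis by (simp add: square_eq_1_iff)
qed

lemma sigmaD_shift: "pcompose sigmaD [:1, 1:] = sigmaD - 1"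
proof -
  let ?c = sigma_t_coeff
  have "dmult (dmonom 0 [:0, 1:]) (dmonom 1 1) = dmult (dmonom 1 1) (dmonom 0 [:1, 1:])"
    by (simp add: dmult_dmonom pcompose_pCons pcompose_1)
  from arg_cong[of _ _ \<sigma>, OF this]
  have "dmult (dmonom 1 [:?c:]) (dmonom 0 (pcompose [:0, 1:] sigmaD))
      = dmult (dmonom 0 (pcompose [:1, 1:] sigmaD)) (dmonom 1 [:?c:])"
    by (simp only: sigma_dmult_dmonom sigma_dmonom_0 sigma_t_eq sigma0_eq_pcompose)
  then have "smult ?c sigmaD = smult ?c (1 + pcompose sigmaD [:1, 1:])"
    by (simp add: dmult_dmonom pcompose_pCons pcompose_add pcompose_1 smult_add_right smult_one)
  then have "smult ?c (sigmaD - (1 + pcompose sigmaD [:1, 1:])) = 0"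
    by (simp add: smult_diff_right)
  then show ?thesis using sigma_t_coeff_nonzero by (simp add: algebra_simps)
qed

lemma sigmaD_eq: "sigmaD = [:coeff sigmaD 0, -1:]"
proof -
  define b a where "b = coeff sigmaD 0" and "a = coeff sigmaD 1"
  have lin: "sigmaD = [:b, a:]" using sigmaD_linear by (simp add: a_def b_def)
  have "[:b + a, a:] = [:b - 1, a:]"
    using sigmaD_shift by (simp add: lin pcompose_pCons one_pCons)
  then have "a = -1" by (simp add: eq_neg_iff_add_eq_0 add.commute)
  then show ?thesis using lin b_def by simp
qed

lemma sigma_t_power: "\<sigma> (dmonom k 1) = dmonom k [:sigma_t_coeff powi k:]"
proof (induction k rule: int_induct[where k = 0])
  case base
  show ?case using sigma_one by (simp add: one_pCons)
next
  case (step1 i)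
  have "\<sigma> (dmonom (i + 1) 1) = \<sigma> (dmult (dmonom 1 1) (dmonom i 1))"
    by (simp add: dmult_dmonom pcompose_1 add.commute)
  also have "\<dots> = dmonom (i + 1) [:sigma_t_coeff powi i * sigma_t_coeff:]"
    by (simp only: sigma_dmult_dmonom step1.IH sigma_t_eq) (simp add: dmult_dmonom)
  finally show ?case using sigma_t_coeff_nonzero by (simp add: power_int_add_1)
next
  case (step2 i)
  have "\<sigma> (dmonom (i - 1) 1) = \<sigma> (dmult (dmonom (-1) 1) (dmonom i 1))"
    by (simp add: dmult_dmonom pcompose_1)
  also have "\<dots> = dmonom (i - 1) [:sigma_t_coeff powi i * inverse sigma_t_coeff:]"
    by (simp only: sigma_dmult_dmonom step2.IH sigma_t_inverse_eq) (simp add: dmult_dmonom)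
  finally show ?case
    using sigma_t_coeff_nonzero by (simp add: power_int_diff field_simps)
qed

lemma sigma_dmonom: "\<sigma> (dmonom k f) = sigma_sb sigma_t_coeff (coeff sigmaD 0) (dmonom k f)"
proof -
  have D_shift: "pcompose sigmaD [:of_int k, 1:] = [:coeff sigmaD 0 - of_int k, -1:]"
    by (subst sigmaD_eq) (simp add: pcompose_pCons)
  have "\<sigma> (dmonom k f) = \<sigma> (dmult (dmonom k 1) (dmonom 0 f))"
    by (simp add: dmult_dmonom)
  also have "\<dots> = dmonom k (pcompose (pcompose f sigmaD) [:of_int k, 1:] * [:sigma_t_coeff powi k:])"
    by (simp only: sigma_dmult_dmonom sigma_t_power sigma_dmonom_0 sigma0_eq_pcompose)
      (simp add: dmult_dmonom)
  also have "\<dots> = sigma_sb sigma_t_coeff (coeff sigmaD 0) (dmonom k f)"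
    by (simp add: sigma_sb_dmonom D_shift mult.commute flip: pcompose_assoc)
  finally show ?thesis .
qed

lemma sigma_eq_sigma_sb: "X \<in> Das \<Longrightarrow> \<sigma> X = sigma_sb sigma_t_coeff (coeff sigmaD 0) X"
  by (rule additive_maps_eq_on_Das[OF sigma_dadd sigma_sb_dadd sigma_dmonom])

end

theorem mainTheorem1:
  fixes \<sigma> :: "(int \<Rightarrow> complex poly) \<Rightarrow> (int \<Rightarrow> complex poly)"
  assumes "anti_involution \<sigma>"
    and "preserves_grading \<sigma>"
  shows "\<exists>b::complex. (\<forall>X\<in>Das. \<sigma> X = sigma_minus b X) \<or> (\<forall>X\<in>Das. \<sigma> X = sigma_plus b X)"
proof -
  interpret graded_anti_involution \<sigma> using assms by unfold_locales
  show ?thesis using sigma_t_coeff_cases sigma_eq_sigma_sb by metis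
qed

end
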